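(* Let $K$ be an $\mathcal R$-dioid, $m\ge 2$, and $e:=\sum_{i<m}q_ip_i\in C_m'$. Let $\phi(x)$ be an expression built with $+$, $\cdot$, ${}^*$ from elements of $K$, the element $\pi=q_0p_0$, the brackets $p_1,\ldots,p_{m-1},q_1,\ldots,q_{m-1}$ and a variable $x$ (so $p_0$ and $q_0$ occur only inside $\pi$), and for $c\in K\otimes_{\mathcal R}C_m'$ let $\phi(c)$ denote its value in $K\otimes_{\mathcal R}C_m'$ with $x:=c$. Then \[ p_0\,\phi(e)\,q_0=p_0\,\phi(1)\,q_0 \quad\text{and}\quad p_0\,\phi(1)\,q_0\in Z_{C_m'}K. \]
   Context: An $\mathcal R$-dioid is a dioid in which every regular subset $A$ of its multiplicative monoid has a least upper bound $\sum A$ with $\sum(AB)=(\sum A)(\sum B)$; equivalently, a $*$-continuous Kleene algebra. An $\mathcal R$-congruence is a semiring congruence $\rho$ such that regular sets with equal downward closures modulo $\rho$ have congruent suprema. $\Delta_m=\{p_0,\dots,p_{m-1},q_0,\dots,q_{m-1}\}$; $C_m'=\mathcal R\Delta_m^*/\rho$ where $\mathcal R\Delta_m^*$ is the algebra of regular languages over $\Delta_m$ and $\rho$ is the least $\mathcal R$-congruence containing $p_iq_j=\delta_{i,j}$ for $i,j<m$. $K\otimes_{\mathcal R}C_m'$ is the tensor product of $\mathcal R$-dioids (universal $\mathcal R$-dioid receiving $\mathcal R$-morphisms from $K$ and $C_m'$ with elementwise commuting images); elements of $K$ and $C_m'$ are identified with their images. $Z_{C_m'}K$ is the set of elements of $K\otimes_{\mathcal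 R}C_m'$ commuting with every element of $C_m'$. *)

theory Defs
  imports Main
begin

text \<open>A dioid: idempotent semiring with 0 and 1 (0 = 1 is allowed).\<close>
class dioid = semiring_0 + monoid_mult +
  assumes add_idem: "x + x = x"

definition setmul :: "('a \<Rightarrow> 'a \<Rightarrow> 'a) \<Rightarrow> 'a set \<Rightarrow> 'a set \<Rightarrow> 'a set" where
  "setmul mul A B = {mul a b | a b. a \<in> A \<and> b \<in> B}"

definition mstar :: "('a \<Rightarrow> 'a \<Rightarrow> 'a) \<Rightarrow> 'a \<Rightarrow> 'a set \<Rightarrow> 'a set" where
  "mstar mul one A = {foldr mul xs one | xs. set xs \<subseteq> A}"

inductive ratsub :: "('a \<Rightarrow> 'a \<Rightarrow> 'a) \<Rightarrow> 'a \<Rightarrow> 'a set \<Rightarrow> 'a set \<Rightarrow> bool"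
  for mul one S where
  fin: "finite A \<Longrightarrow> A \<subseteq> S \<Longrightarrow> ratsub mul one S A"
| un: "ratsub mul one S A \<Longrightarrow> ratsub mul one S B \<Longrightarrow> ratsub mul one S (A \<union> B)"
| prod: "ratsub mul one S A \<Longrightarrow> ratsub mul one S B \<Longrightarrow> ratsub mul one S (setmul mul A B)"
| star: "ratsub mul one S A \<Longrightarrow> ratsub mul one S (mstar mul one A)"

abbreviation regular :: "'a::dioid set \<Rightarrow> bool" where
  "regular A \<equiv> ratsub (*) 1 UNIV A"

definition dle :: "'a::dioid \<Rightarrow> 'a \<Rightarrow> bool" where
  "dle x y \<longleftrightarrow> x + y = y"

definition is_lubD :: "'a::dioid set \<Rightarrow> 'a \<Rightarrow> bool" where
  "is_lubD A s \<longleftrightarrow> (\<forall>a\<in>A. dle a s) \<and> (\<forall>u. (\<forall>a\<in>A. dle a u) \<longrightarrow> dle s u)"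

definition sumR :: "'a::dioid set \<Rightarrow> 'a" where
  "sumR A = (THE s. is_lubD A s)"

text \<open>R-dioid (class axioms written with dle/is_lubD/sumR unfolded, since
  global constants of sort dioid cannot be used inside the class specification).\<close>
class rdioid = dioid +
  assumes regular_lub: "ratsub (*) 1 UNIV (A :: 'a set) \<Longrightarrow>
     \<exists>s. (\<forall>a\<in>A. a + s = s) \<and> (\<forall>u. (\<forall>a\<in>A. a + u = u) \<longrightarrow> s + u = u)"
  and sumR_mult: "ratsub (*) 1 UNIV (A :: 'a set) \<Longrightarrow> ratsub (*) 1 UNIV B \<Longrightarrow>
     (THE s. (\<forall>a\<in>setmul (*) A B. a + s = s) \<and> (\<forall>u. (\<forall>a\<in>setmul (*) A B. a + u = u) \<longrightarrow> s + u = u))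
     = (THE s. (\<forall>a\<in>A. a + s = s) \<and> (\<forall>u. (\<forall>a\<in>A. a + u = u) \<longrightarrow> s + u = u))
     * (THE s. (\<forall>a\<in>B. a + s = s) \<and> (\<forall>u. (\<forall>a\<in>B. a + u = u) \<longrightarrow> s + u = u))"

lemma rdioid_sumR_mult: "regular (A::'a::rdioid set) \<Longrightarrow> regular B \<Longrightarrow>
  sumR (setmul (*) A B) = sumR A * sumR B"
  using sumR_mult[of A B] by (simp add: sumR_def is_lubD_def dle_def)

definition kstar :: "'a::dioid \<Rightarrow> 'a" where
  "kstar a = sumR (mstar (*) 1 {a})"

definition Rmor :: "('a::rdioid \<Rightarrow> 'b::rdioid) \<Rightarrow> bool" where
  "Rmor f \<longleftrightarrow> f 0 = 0 \<and> f 1 = 1 \<and> (\<forall>a b. f (a + b) = f a + f b) \<and>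
     (\<forall>a b. f (a * b) = f a * f b) \<and> (\<forall>A. regular A \<longrightarrow> f (sumR A) = sumR (f ` A))"

datatype letter = Lp nat | Lq nat

definition Delta :: "nat \<Rightarrow> letter set" where
  "Delta m = {Lp i | i. i < m} \<union> {Lq i | i. i < m}"

abbreviation lconc :: "letter list set \<Rightarrow> letter list set \<Rightarrow> letter list set" where
  "lconc L M \<equiv> setmul (@) L M"

inductive reglang :: "nat \<Rightarrow> letter list set \<Rightarrow> bool" for m where
  empty: "reglang m {}"
| eps: "reglang m {[]}"
| sing: "a \<in> Delta m \<Longrightarrow> reglang m {[a]}"
| un: "reglang m L \<Longrightarrow> reglang m M \<Longrightarrow> reglang m (L \<union> M)"
| conc: "reglang m L \<Longrightarrow> reglang m M \<Longrightarrow> reglang m (lconc L M)"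
| star: "reglang m L \<Longrightarrow> reglang m (mstar (@) [] L)"

abbreviation regular_lang :: "nat \<Rightarrow> letter list set set \<Rightarrow> bool" where
  "regular_lang m A \<equiv> ratsub lconc {[]} (Collect (reglang m)) A"

text \<open>R-congruence on R Delta_m^* (whose sum is union and order is inclusion).
  The downward closure of A modulo rho is represented by the set of representatives
  X with [X] \<le> [L] for some L in A, i.e. (X \<union> L, L) in rho.\<close>
definition rcong :: "nat \<Rightarrow> (letter list set \<times> letter list set) set \<Rightarrow> bool" where
  "rcong m \<rho> \<longleftrightarrow> equiv (Collect (reglang m)) \<rho> \<and>
     (\<forall>L L' M M'. (L, L') \<in> \<rho> \<longrightarrow> (M, M') \<in> \<rho> \<longrightarrow>
        (L \<union> M, L' \<union> M') \<in> \<rho> \<and> (lconc L M, lconc L' M') \<in> \<rho>) \<and>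
     (\<forall>A B. regular_lang m A \<longrightarrow> regular_lang m B \<longrightarrow>
        {X. reglang m X \<and> (\<exists>L\<in>A. (X \<union> L, L) \<in> \<rho>)} =
        {X. reglang m X \<and> (\<exists>L\<in>B. (X \<union> L, L) \<in> \<rho>)} \<longrightarrow>
        (\<Union>A, \<Union>B) \<in> \<rho>)"

definition bracket_rels :: "nat \<Rightarrow> (letter list set \<times> letter list set) set" where
  "bracket_rels m = {({[Lp i, Lq j]}, if i = j then {[]} else {}) | i j. i < m \<and> j < m}"

text \<open>rho: least R-congruence containing p_i q_j = delta_ij; C'_m = R Delta_m^* / rho.\<close>
definition rho :: "nat \<Rightarrow> (letter list set \<times> letter list set) set" where
  "rho m = \<Inter> {\<rho>. rcong m \<rho> \<and> bracket_rels m \<subseteq> \<rho>}"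

definition Rmor_lang :: "nat \<Rightarrow> (letter list set \<Rightarrow> 'b::rdioid) \<Rightarrow> bool" where
  "Rmor_lang m h \<longleftrightarrow> h {} = 0 \<and> h {[]} = 1 \<and>
     (\<forall>L M. reglang m L \<longrightarrow> reglang m M \<longrightarrow>
        h (L \<union> M) = h L + h M \<and> h (lconc L M) = h L * h M) \<and>
     (\<forall>A. regular_lang m A \<longrightarrow> h (\<Union>A) = sumR (h ` A))"

text \<open>R-morphism C'_m -> T, given by an R-morphism R Delta_m^* -> T constant on rho-classes.\<close>
definition Rmor_C :: "nat \<Rightarrow> (letter list set \<Rightarrow> 'b::rdioid) \<Rightarrow> bool" where
  "Rmor_C m h \<longleftrightarrow> Rmor_lang m h \<and> (\<forall>L M. (L, M) \<in> rho m \<longrightarrow> h L = h M)"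

datatype 'k rexp = RConst 'k | RPi | RP nat | RQ nat | RX
  | RPlus "'k rexp" "'k rexp" | RTimes "'k rexp" "'k rexp" | RStar "'k rexp"

fun wf_rexp :: "nat \<Rightarrow> 'k rexp \<Rightarrow> bool" where
  "wf_rexp m (RP i) = (1 \<le> i \<and> i < m)"
| "wf_rexp m (RQ i) = (1 \<le> i \<and> i < m)"
| "wf_rexp m (RPlus a b) = (wf_rexp m a \<and> wf_rexp m b)"
| "wf_rexp m (RTimes a b) = (wf_rexp m a \<and> wf_rexp m b)"
| "wf_rexp m (RStar a) = wf_rexp m a"
| "wf_rexp m _ = True"

text \<open>Value in T (K via f, C'_m via h) with x := c.\<close>
fun eval_rexp :: "('k \<Rightarrow> 'b::rdioid) \<Rightarrow> (letter list set \<Rightarrow> 'b) \<Rightarrow> 'b \<Rightarrow> 'k rexp \<Rightarrow> 'b" where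
  "eval_rexp f h c (RConst k) = f k"
| "eval_rexp f h c RPi = h {[Lq 0, Lp 0]}"
| "eval_rexp f h c (RP i) = h {[Lp i]}"
| "eval_rexp f h c (RQ i) = h {[Lq i]}"
| "eval_rexp f h c RX = c"
| "eval_rexp f h c (RPlus a b) = eval_rexp f h c a + eval_rexp f h c b"
| "eval_rexp f h c (RTimes a b) = eval_rexp f h c a * eval_rexp f h c b"
| "eval_rexp f h c (RStar a) = kstar (eval_rexp f h c a)"

end

theory Submission
  imports Defs
begin

text \<open>Call \<open>y\<close> a residual of a set \<open>T\<close> if \<open>y q\<^sub>i\<^sub>1 \<cdots> q\<^sub>i\<^sub>n \<in> T\<close> for all indices
  \<open>i\<^sub>j \<ge> 1\<close>. Since \<open>p\<^sub>i q\<^sub>j = \<delta>\<^sub>i\<^sub>j\<close>, right multiplication by an atom of \<open>\<phi>\<close> either cancels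
  against the leading \<open>q\<close> of such a word, gives \<open>0\<close>, or lengthens the word; elements of \<open>K\<close>
  commute with the word. Together with closure under regular sums, the residuals of suitable
  \<open>T\<close> are therefore stable under right multiplication by \<open>\<phi>(1)\<close>, and \<open>p\<^sub>0\<close> is one of them.
  For \<open>T = {z. z e = z}\<close> every residual \<open>y\<close> satisfies \<open>y e = y\<close>, hence \<open>y \<phi>(e) = y \<phi>(1)\<close>;
  for \<open>T = {z. z q\<^sub>0 central}\<close> the residual \<open>p\<^sub>0 \<phi>(1)\<close> makes \<open>p\<^sub>0 \<phi>(1) q\<^sub>0\<close> central.\<close>

lemma is_lubD_unique: "is_lubD A s \<Longrightarrow> is_lubD A t \<Longrightarrow> s = (t::'a::dioid)"
  unfolding is_lubD_def dle_def by (metis add.commute)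

lemma sumR_eqI: "is_lubD A s \<Longrightarrow> sumR A = s"
  unfolding sumR_def using is_lubD_unique by blast

lemma sumR_empty: "sumR {} = (0::'a::dioid)"
  by (rule sumR_eqI) (simp add: is_lubD_def dle_def)

lemma sumR_pair: "sumR {a, b} = (a + b :: 'a::dioid)"
  by (rule sumR_eqI)
    (simp add: is_lubD_def dle_def add_idem flip: add.assoc,
     metis add.assoc add.commute add_idem)

lemma sumR_singleton: "sumR {a} = (a::'a::dioid)"
  using sumR_pair[of a a] by (simp add: add_idem)

lemma regular_finite: "finite A \<Longrightarrow> regular (A::'a::dioid set)"
  by (rule ratsub.fin) auto

lemma setmul_singleton_right: "setmul (*) A {u} = (\<lambda>a. a * u) ` A"
  and setmul_singleton_left: "setmul (*) {u} A = (\<lambda>a. u * a) ` A"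
  by (auto simp: setmul_def)

lemma regular_image_mult_right: "regular (A::'a::dioid set) \<Longrightarrow> regular ((\<lambda>a. a * u) ` A)"
  using ratsub.prod[OF _ regular_finite, of A "{u}"] by (simp add: setmul_singleton_right)

lemma sumR_mult_right: "regular (A::'a::rdioid set) \<Longrightarrow> sumR A * u = sumR ((\<lambda>a. a * u) ` A)"
  using rdioid_sumR_mult[of A "{u}"] regular_finite[of "{u}"]
  by (simp add: setmul_singleton_right sumR_singleton)

lemma sumR_mult_left: "regular (A::'a::rdioid set) \<Longrightarrow> u * sumR A = sumR ((\<lambda>a. u * a) ` A)"
  using rdioid_sumR_mult[of "{u}" A] regular_finite[of "{u}"]
  by (simp add: setmul_singleton_left sumR_singleton)

lemma mstar_singleton: "mstar (*) 1 {a::'a::monoid_mult} = range ((^) a)"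
proof -
  have "foldr (*) xs 1 = a ^ length xs" if "set xs \<subseteq> {a}" for xs
    using that by (induction xs) auto
  moreover have "a ^ n = foldr (*) (replicate n a) 1" for n
    by (induction n) auto
  ultimately show ?thesis
    unfolding mstar_def by (auto intro!: exI[of _ "replicate _ a"])
qed

lemma regular_range_mult_power: "regular (range (\<lambda>n. y * a ^ n :: 'a::dioid))"
proof -
  have "regular (setmul (*) {y} (mstar (*) 1 {a}))"
    by (intro ratsub.prod ratsub.star regular_finite) auto
  moreover have "setmul (*) {y} (mstar (*) 1 {a}) = range (\<lambda>n. y * a ^ n)"
    by (auto simp: setmul_singleton_left mstar_singleton)
  ultimately show ?thesis by simp
qed

lemma mult_kstar: "y * kstar a = sumR (range (\<lambda>n. y * a ^ n :: 'a::rdioid))"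
proof -
  have "regular (mstar (*) 1 {a})"
    by (intro ratsub.star regular_finite) auto
  then show ?thesis
    unfolding kstar_def by (simp add: sumR_mult_left mstar_singleton image_image)
qed

definition sumR_closed :: "'a::dioid set \<Rightarrow> bool" where
  "sumR_closed S \<longleftrightarrow> (\<forall>A. regular A \<longrightarrow> A \<subseteq> S \<longrightarrow> sumR A \<in> S)"

definition right_closed :: "'a::dioid set \<Rightarrow> 'a \<Rightarrow> bool" where
  "right_closed S a \<longleftrightarrow> (\<forall>y\<in>S. y * a \<in> S)"

definition right_equiv :: "'a::dioid set \<Rightarrow> 'a \<Rightarrow> 'a \<Rightarrow> bool" where
  "right_equiv S a b \<longleftrightarrow> (\<forall>y\<in>S. y * a = y * b)"

lemma sumR_closedD: "sumR_closed S \<Longrightarrow> regular A \<Longrightarrow> A \<subseteq> S \<Longrightarrow> sumR A \<in> S"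
  unfolding sumR_closed_def by blast

lemma sumR_closed_zero: "sumR_closed S \<Longrightarrow> 0 \<in> S"
  using sumR_closedD[of S "{}"] by (simp add: regular_finite sumR_empty)

lemma sumR_closed_add: "sumR_closed S \<Longrightarrow> y \<in> S \<Longrightarrow> z \<in> S \<Longrightarrow> y + z \<in> S"
  using sumR_closedD[of S "{y, z}"] by (simp add: regular_finite sumR_pair)

lemma right_closed_one: "right_closed S 1"
  by (simp add: right_closed_def)

lemma right_closed_mult: "right_closed S a \<Longrightarrow> right_closed S b \<Longrightarrow> right_closed S (a * b)"
  by (simp add: right_closed_def flip: mult.assoc)

lemma right_closed_add:
  "sumR_closed S \<Longrightarrow> right_closed S a \<Longrightarrow> right_closed S b \<Longrightarrow> right_closed S (a + b)"
  by (simp add: right_closed_def distrib_left sumR_closed_add)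

lemma right_closed_power: "right_closed S a \<Longrightarrow> right_closed S (a ^ n)"
  by (induction n) (simp_all add: right_closed_one right_closed_mult)

lemma right_closed_kstar:
  "sumR_closed S \<Longrightarrow> right_closed S a \<Longrightarrow> right_closed S (kstar (a::'a::rdioid))"
  unfolding right_closed_def
  by (auto simp: mult_kstar regular_range_mult_power
      intro!: sumR_closedD right_closed_power[unfolded right_closed_def, rule_format])

lemma right_equiv_mult:
  "right_equiv S a a' \<Longrightarrow> right_closed S a' \<Longrightarrow> right_equiv S b b' \<Longrightarrow> right_equiv S (a * b) (a' * b')"
  by (simp add: right_equiv_def right_closed_def flip: mult.assoc)

lemma right_equiv_add: "right_equiv S a a' \<Longrightarrow> right_equiv S b b' \<Longrightarrow> right_equiv S (a + b) (a' + b')"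
  by (simp add: right_equiv_def distrib_left)

lemma right_equiv_power: "right_equiv S a b \<Longrightarrow> right_closed S b \<Longrightarrow> right_equiv S (a ^ n) (b ^ n)"
proof (induction n)
  case (Suc n)
  then show ?case
    using right_equiv_mult[OF Suc.IH right_closed_power[OF Suc.prems(2)] Suc.prems(1)]
    by (simp only: power_Suc2)
qed (simp add: right_equiv_def)

lemma right_equiv_kstar:
  "right_equiv S a b \<Longrightarrow> right_closed S b \<Longrightarrow> right_equiv S (kstar a) (kstar (b::'a::rdioid))"
  using right_equiv_power[of S a b] by (simp add: right_equiv_def mult_kstar)

definition atoms_right_closed ::
    "nat \<Rightarrow> ('k \<Rightarrow> 'b::rdioid) \<Rightarrow> (letter list set \<Rightarrow> 'b) \<Rightarrow> 'b set \<Rightarrow> bool" where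
  "atoms_right_closed m f h S \<longleftrightarrow> (\<forall>k. right_closed S (f k)) \<and> right_closed S (h {[Lq 0, Lp 0]})
     \<and> (\<forall>i\<in>{1..<m}. right_closed S (h {[Lp i]}) \<and> right_closed S (h {[Lq i]}))"

lemma right_closed_eval_rexp:
  assumes "sumR_closed S" "atoms_right_closed m f h S" "right_closed S c" "wf_rexp m \<phi>"
  shows "right_closed S (eval_rexp f h c \<phi>)"
  using assms(4)
  by (induction \<phi>) (use assms(1-3) in
      \<open>auto simp: atoms_right_closed_def intro: right_closed_add right_closed_mult right_closed_kstar\<close>)

lemma right_equiv_eval_rexp:
  assumes "sumR_closed S" "atoms_right_closed m f h S" "right_closed S d" "right_equiv S c d"
    and "wf_rexp m \<phi>"
  shows "right_equiv S (eval_rexp f h c \<phi>) (eval_rexp f h d \<phi>)"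
  using assms(5)
proof (induction \<phi>)
  case (RPlus a b)
  then show ?case by (simp add: right_equiv_add)
next
  case (RTimes a b)
  then show ?case
    using right_closed_eval_rexp[OF assms(1-3)] by (simp add: right_equiv_mult)
next
  case (RStar a)
  then show ?case
    using right_closed_eval_rexp[OF assms(1-3)] by (simp add: right_equiv_kstar)
qed (use assms(4) in \<open>simp_all add: right_equiv_def\<close>)

locale bracket_tensor =
  fixes m :: nat and f :: "'k \<Rightarrow> 'b::rdioid" and h :: "letter list set \<Rightarrow> 'b"
  assumes m_pos: "0 < m"
    and Rmor_C_h: "Rmor_C m h"
    and f_commute: "\<forall>k L. reglang m L \<longrightarrow> f k * h L = h L * f k"
begin

abbreviation P :: "nat \<Rightarrow> 'b" where "P i \<equiv> h {[Lp i]}"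
abbreviation Q :: "nat \<Rightarrow> 'b" where "Q i \<equiv> h {[Lq i]}"

lemma reglang_p: "i < m \<Longrightarrow> reglang m {[Lp i]}"
  and reglang_q: "i < m \<Longrightarrow> reglang m {[Lq i]}"
  by (auto intro: reglang.sing simp: Delta_def)

lemma h_empty: "h {} = 0"
  and h_eps: "h {[]} = 1"
  and h_union: "reglang m L \<Longrightarrow> reglang m M \<Longrightarrow> h (L \<union> M) = h L + h M"
  and h_conc: "reglang m L \<Longrightarrow> reglang m M \<Longrightarrow> h (lconc L M) = h L * h M"
  using Rmor_C_h by (auto simp: Rmor_C_def Rmor_lang_def)

lemma h_two_letters: "a \<in> Delta m \<Longrightarrow> b \<in> Delta m \<Longrightarrow> h {[a, b]} = h {[a]} * h {[b]}"
proof -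
  assume "a \<in> Delta m" "b \<in> Delta m"
  then have "h (lconc {[a]} {[b]}) = h {[a]} * h {[b]}"
    by (intro h_conc reglang.sing)
  moreover have "lconc {[a]} {[b]} = {[a, b]}" by (auto simp: setmul_def)
  ultimately show ?thesis by simp
qed

lemma p_mult_q: "i < m \<Longrightarrow> j < m \<Longrightarrow> P i * Q j = (if i = j then 1 else 0)"
proof -
  assume ij: "i < m" "j < m"
  then have "({[Lp i, Lq j]}, if i = j then {[]} else {}) \<in> rho m"
    unfolding rho_def bracket_rels_def by blast
  then have "h {[Lp i, Lq j]} = h (if i = j then {[]} else {})"
    using Rmor_C_h by (auto simp: Rmor_C_def)
  with ij show ?thesis
    by (simp add: h_two_letters Delta_def h_empty h_eps split: if_splits)
qed

lemma h_pi: "h {[Lq 0, Lp 0]} = Q 0 * P 0"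
  using m_pos by (simp add: h_two_letters Delta_def)

lemma h_bracket_sum:
  "n \<le> m \<Longrightarrow> reglang m {[Lq i, Lp i] | i. i < n} \<and> h {[Lq i, Lp i] | i. i < n} = (\<Sum>i<n. Q i * P i)"
proof (induction n)
  case 0
  then show ?case by (simp add: h_empty reglang.empty)
next
  case (Suc n)
  let ?E = "{[Lq i, Lp i] | i. i < n}"
  have E: "reglang m ?E" "h ?E = (\<Sum>i<n. Q i * P i)"
    using Suc by auto
  have pair: "reglang m {[Lq n, Lp n]}" "h {[Lq n, Lp n]} = Q n * P n"
    using reglang.conc[OF reglang_q reglang_p, of n] Suc.prems
    by (simp_all add: setmul_def h_two_letters Delta_def)
  have "{[Lq i, Lp i] | i. i < Suc n} = ?E \<union> {[Lq n, Lp n]}"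
    by (auto simp: less_Suc_eq)
  then show ?case
    using reglang.un[OF E(1) pair(1)] h_union[OF E(1) pair(1)] E(2) pair(2) by simp
qed

abbreviation e :: 'b where "e \<equiv> h {[Lq i, Lp i] | i. i < m}"

lemma reglang_e: "reglang m {[Lq i, Lp i] | i. i < m}"
  using h_bracket_sum[of m] by simp

lemma p_mult_e: "j < m \<Longrightarrow> P j * e = P j"
proof -
  assume j: "j < m"
  have "P j * e = (\<Sum>i<m. P j * Q i * P i)"
    using h_bracket_sum[of m] by (simp add: sum_distrib_left mult.assoc)
  also have "\<dots> = (\<Sum>i<m. if j = i then P i else 0)"
    using j by (intro sum.cong) (simp_all add: p_mult_q)
  finally show ?thesis using j by simp
qed

definition centralizer :: "'b set" where
  "centralizer = {c. \<forall>L. reglang m L \<longrightarrow> c * h L = h L * c}"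

lemma one_in_centralizer: "1 \<in> centralizer"
  by (simp add: centralizer_def)

lemma mult_in_centralizer: "c \<in> centralizer \<Longrightarrow> d \<in> centralizer \<Longrightarrow> c * d \<in> centralizer"
  unfolding centralizer_def mem_Collect_eq by (metis mult.assoc)

lemma f_in_centralizer: "f k \<in> centralizer"
  using f_commute by (simp add: centralizer_def)

lemma sumR_closed_centralizer: "sumR_closed centralizer"
  unfolding sumR_closed_def
proof (intro allI impI)
  fix A assume A: "regular A" "A \<subseteq> centralizer"
  have "sumR A * h L = h L * sumR A" if "reglang m L" for L
  proof -
    have "(\<lambda>a. a * h L) ` A = (\<lambda>a. h L * a) ` A"
      using A(2) that by (auto simp: centralizer_def intro!: image_cong)
    then show ?thesis
      using A(1) by (simp add: sumR_mult_left sumR_mult_right)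
  qed
  then show "sumR A \<in> centralizer"
    by (simp add: centralizer_def)
qed

definition q_word :: "nat list \<Rightarrow> 'b" where
  "q_word w = foldr (\<lambda>i a. Q i * a) w 1"

lemma q_word_simps [simp]: "q_word [] = 1" "q_word (i # w) = Q i * q_word w"
  by (simp_all add: q_word_def)

lemma f_commute_q_word: "w \<in> lists {1..<m} \<Longrightarrow> f k * q_word w = q_word w * f k"
proof (induction w)
  case (Cons i w)
  then have "f k * Q i = Q i * f k"
    using f_commute reglang_q by simp
  with Cons show ?case by (simp add: mult.assoc flip: mult.assoc[of "f k"])
qed simp

lemma p_mult_q_mult: "i < m \<Longrightarrow> j < m \<Longrightarrow> P i * (Q j * x) = (if i = j then x else 0)"
  by (simp add: p_mult_q flip: mult.assoc)

definition q_residual :: "'b set \<Rightarrow> 'b set" where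
  "q_residual T = {y. \<forall>w\<in>lists {1..<m}. y * q_word w \<in> T}"

lemma q_residualI: "(\<And>w. w \<in> lists {1..<m} \<Longrightarrow> y * q_word w \<in> T) \<Longrightarrow> y \<in> q_residual T"
  unfolding q_residual_def by blast

lemma q_residual_mult_q_word: "y \<in> q_residual T \<Longrightarrow> w \<in> lists {1..<m} \<Longrightarrow> y * q_word w \<in> T"
  unfolding q_residual_def by blast

lemma q_residualD: "y \<in> q_residual T \<Longrightarrow> y \<in> T"
  using q_residual_mult_q_word[of y T "[]"] by simp

lemma sumR_closed_q_residual:
  assumes T: "sumR_closed T"
  shows "sumR_closed (q_residual T)"
  unfolding sumR_closed_def
proof (intro allI impI q_residualI)
  fix A w assume A: "regular A" "A \<subseteq> q_residual T" and "w \<in> lists {1..<m}"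
  then have "(\<lambda>a. a * q_word w) ` A \<subseteq> T"
    using q_residual_mult_q_word by blast
  then show "sumR A * q_word w \<in> T"
    using sumR_closedD[OF T regular_image_mult_right[OF A(1)]] sumR_mult_right[OF A(1)] by simp
qed

lemma right_closed_q_residual_f:
  assumes "\<And>z. z \<in> T \<Longrightarrow> z * f k \<in> T"
  shows "right_closed (q_residual T) (f k)"
  unfolding right_closed_def
proof (intro ballI q_residualI)
  fix y w assume y: "y \<in> q_residual T" and w: "w \<in> lists {1..<m}"
  have "y * f k * q_word w = y * q_word w * f k"
    using f_commute_q_word[OF w] by (simp add: mult.assoc)
  also have "\<dots> \<in> T"
    by (rule assms) (rule q_residual_mult_q_word[OF y w])
  finally show "y * f k * q_word w \<in> T" .
qed

lemma right_closed_q_residual_Q: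
  assumes "1 \<le> i" "i < m"
  shows "right_closed (q_residual T) (Q i)"
  unfolding right_closed_def
proof (intro ballI q_residualI)
  fix y w assume "y \<in> q_residual T" "w \<in> lists {1..<m}"
  with assms have "y * q_word (i # w) \<in> T"
    by (intro q_residual_mult_q_word) auto
  then show "y * Q i * q_word w \<in> T" by (simp add: mult.assoc)
qed

lemma right_closed_q_residual_P:
  assumes "sumR_closed T" "\<And>z. z * P i \<in> T" "i < m"
  shows "right_closed (q_residual T) (P i)"
  unfolding right_closed_def
proof (intro ballI q_residualI)
  fix y w assume y: "y \<in> q_residual T" and w: "w \<in> lists {1..<m}"
  show "y * P i * q_word w \<in> T"
  proof (cases w)
    case Nil
    then show ?thesis using assms(2) by simp
  next
    case (Cons j w')
    with w have "j < m" "w' \<in> lists {1..<m}" by auto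
    with y assms(1,3) Cons show ?thesis
      by (simp add: mult.assoc p_mult_q_mult q_residual_mult_q_word sumR_closed_zero)
  qed
qed

lemma right_closed_q_residual_pi:
  assumes "sumR_closed T" "\<And>z. z \<in> T \<Longrightarrow> z * Q 0 * P 0 \<in> T"
  shows "right_closed (q_residual T) (Q 0 * P 0)"
  unfolding right_closed_def
proof (intro ballI q_residualI)
  fix y w assume y: "y \<in> q_residual T" and w: "w \<in> lists {1..<m}"
  show "y * (Q 0 * P 0) * q_word w \<in> T"
  proof (cases w)
    case Nil
    then show ?thesis using assms(2)[OF q_residualD[OF y]] by (simp add: mult.assoc)
  next
    case (Cons j w')
    with w m_pos have "P 0 * q_word w = 0" by (auto simp: p_mult_q_mult)
    then show ?thesis using assms(1) by (simp add: mult.assoc sumR_closed_zero)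
  qed
qed

lemma p0_in_q_residual:
  assumes "sumR_closed T" "P 0 \<in> T"
  shows "P 0 \<in> q_residual T"
proof (intro q_residualI)
  fix w assume w: "w \<in> lists {1..<m}"
  show "P 0 * q_word w \<in> T"
  proof (cases w)
    case Nil
    then show ?thesis using assms(2) by simp
  next
    case (Cons j w')
    with w m_pos have "P 0 * q_word w = 0" by (auto simp: p_mult_q_mult)
    then show ?thesis using assms(1) by (simp add: sumR_closed_zero)
  qed
qed

lemma atoms_right_closed_q_residual:
  assumes "sumR_closed T"
    and "\<And>z k. z \<in> T \<Longrightarrow> z * f k \<in> T"
    and "\<And>z i. 1 \<le> i \<Longrightarrow> i < m \<Longrightarrow> z * P i \<in> T"
    and "\<And>z. z \<in> T \<Longrightarrow> z * Q 0 * P 0 \<in> T"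
  shows "atoms_right_closed m f h (q_residual T)"
  using assms
  by (simp add: atoms_right_closed_def h_pi right_closed_q_residual_f right_closed_q_residual_Q
      right_closed_q_residual_P right_closed_q_residual_pi)

lemma residual_fixing_e:
  "sumR_closed (q_residual {z. z * e = z})"
  "atoms_right_closed m f h (q_residual {z. z * e = z})"
  "P 0 \<in> q_residual {z. z * e = z}"
proof -
  have closed: "sumR_closed {z. z * e = z}"
    unfolding sumR_closed_def
  proof (intro allI impI CollectI)
    fix A assume A: "regular A" "A \<subseteq> {z. z * e = z}"
    then have "(\<lambda>a. a * e) ` A = A" by force
    with A(1) show "sumR A * e = sumR A" by (simp add: sumR_mult_right)
  qed
  then show "sumR_closed (q_residual {z. z * e = z})"
    by (rule sumR_closed_q_residual)
  show "atoms_right_closed m f h (q_residual {z. z * e = z})"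
  proof (rule atoms_right_closed_q_residual[OF closed], unfold mem_Collect_eq)
    fix z k assume z: "z * e = z"
    have "z * f k * e = z * e * f k"
      using f_commute reglang_e by (simp add: mult.assoc)
    with z show "z * f k * e = z * f k" by simp
  next
    fix z i assume "i < m"
    then show "z * P i * e = z * P i" by (simp add: mult.assoc p_mult_e)
  next
    fix z
    show "z * Q 0 * P 0 * e = z * Q 0 * P 0" using m_pos by (simp add: mult.assoc p_mult_e)
  qed
  show "P 0 \<in> q_residual {z. z * e = z}"
    using closed m_pos by (intro p0_in_q_residual) (simp_all add: p_mult_e)
qed

lemma residual_centralizing_q0:
  "sumR_closed (q_residual {z. z * Q 0 \<in> centralizer})"
  "atoms_right_closed m f h (q_residual {z. z * Q 0 \<in> centralizer})"
  "P 0 \<in> q_residual {z. z * Q 0 \<in> centralizer}"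
proof -
  have closed: "sumR_closed {z. z * Q 0 \<in> centralizer}"
    unfolding sumR_closed_def
  proof (intro allI impI CollectI)
    fix A assume A: "regular A" "A \<subseteq> {z. z * Q 0 \<in> centralizer}"
    then have "sumR ((\<lambda>a. a * Q 0) ` A) \<in> centralizer"
      by (intro sumR_closedD[OF sumR_closed_centralizer] regular_image_mult_right) auto
    with A(1) show "sumR A * Q 0 \<in> centralizer" by (simp add: sumR_mult_right)
  qed
  then show "sumR_closed (q_residual {z. z * Q 0 \<in> centralizer})"
    by (rule sumR_closed_q_residual)
  show "atoms_right_closed m f h (q_residual {z. z * Q 0 \<in> centralizer})"
  proof (rule atoms_right_closed_q_residual[OF closed], unfold mem_Collect_eq)
    fix z k assume z: "z * Q 0 \<in> centralizer"
    have "z * f k * Q 0 = z * Q 0 * f k"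
      using f_commute reglang_q[OF m_pos] by (simp add: mult.assoc)
    with z show "z * f k * Q 0 \<in> centralizer"
      by (simp add: mult_in_centralizer f_in_centralizer)
  next
    fix z i assume "1 \<le> i" "i < m"
    then show "z * P i * Q 0 \<in> centralizer"
      using m_pos sumR_closed_zero[OF sumR_closed_centralizer] by (simp add: mult.assoc p_mult_q)
  next
    fix z assume "z * Q 0 \<in> centralizer"
    then show "z * Q 0 * P 0 * Q 0 \<in> centralizer"
      using m_pos by (simp add: mult.assoc p_mult_q)
  qed
  show "P 0 \<in> q_residual {z. z * Q 0 \<in> centralizer}"
    using closed m_pos one_in_centralizer by (intro p0_in_q_residual) (simp_all add: p_mult_q)
qed

end

theorem theorem12:
  fixes m :: nat
    and f :: "'k::rdioid \<Rightarrow> 'b::rdioid"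
    and h :: "letter list set \<Rightarrow> 'b"
    and \<phi> :: "'k rexp"
  assumes "m \<ge> 2"
    and "Rmor f"
    and "Rmor_C m h"
    and "\<forall>k L. reglang m L \<longrightarrow> f k * h L = h L * f k"
    and "wf_rexp m \<phi>"
  shows "h {[Lp 0]} * eval_rexp f h (h {[Lq i, Lp i] | i. i < m}) \<phi> * h {[Lq 0]}
           = h {[Lp 0]} * eval_rexp f h 1 \<phi> * h {[Lq 0]}
         \<and> (\<forall>L. reglang m L \<longrightarrow>
              (h {[Lp 0]} * eval_rexp f h 1 \<phi> * h {[Lq 0]}) * h L
              = h L * (h {[Lp 0]} * eval_rexp f h 1 \<phi> * h {[Lq 0]}))"
proof -
  interpret bracket_tensor m f h
    using assms(1,3,4) by unfold_locales simp_all
  have "right_equiv (q_residual {z. z * e = z}) e 1"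
    unfolding right_equiv_def using q_residualD by fastforce
  then have "right_equiv (q_residual {z. z * e = z}) (eval_rexp f h e \<phi>) (eval_rexp f h 1 \<phi>)"
    by (rule right_equiv_eval_rexp[OF residual_fixing_e(1,2) right_closed_one _ assms(5)])
  then have "P 0 * eval_rexp f h e \<phi> = P 0 * eval_rexp f h 1 \<phi>"
    using residual_fixing_e(3) unfolding right_equiv_def by blast
  moreover have "right_closed (q_residual {z. z * Q 0 \<in> centralizer}) (eval_rexp f h 1 \<phi>)"
    by (rule right_closed_eval_rexp[OF residual_centralizing_q0(1,2) right_closed_one assms(5)])
  then have "P 0 * eval_rexp f h 1 \<phi> * Q 0 \<in> centralizer"
    using residual_centralizing_q0(3) q_residualD unfolding right_closed_def by fastforce
  ultimately show ?thesis
    unfolding centralizer_def by simp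
qed

end
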